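(* Let $N\ge 3$ and consider a planar "wheel" framework in $\mathbb{R}^2$: a hub vertex at $\mathbf{U}_0$ and spoke vertices at $\mathbf{U}_1,\dots,\mathbf{U}_N$ arranged in counterclockwise order around $\mathbf{U}_0$, with all indices taken modulo $N$. Its edges are the $N$ spokes $(0,i)$ and the $N$ rim edges $(i,i+1)$, $i=1,\dots,N$. Let $L_i=|\mathbf{U}_i-\mathbf{U}_0|$, $\Delta L_{i,i+1}=|\mathbf{U}_{i+1}-\mathbf{U}_i|$, and let $\alpha_{i,i+1}\in(0,\pi)$ be the planar angle at $\mathbf{U}_0$ between spokes $i$ and $i+1$, with $\sum_{i=1}^N\alpha_{i,i+1}=2\pi$. Define $$\sigma_{i,i+1}=-\csc\alpha_{i,i+1}\,\frac{\Delta L_{i,i+1}}{L_iL_{i+1}}$$ on rim edge $(i,i+1)$, and $$\sigma_i=\frac{\csc\alpha_{i,i+1}}{L_{i+1}}+\frac{\csc\alpha_{i-1,i}}{L_{i-1}}-\frac{\cot\alpha_{i,i+1}+\cot\alpha_{i-1,i}}{L_i}$$ on spoke $(0,i)$. Then this assignment $\boldsymbol{\sigma}$ is a self stress of the framework. That is, for every vertex $n\in\{0,1,\dots,N\}$, $$\sum_{m:\,(n,m)\text{ an edge}}\sigma_{(n,m)}\,\frac{\mathbf{U}_n-\mathbf{U}_m}{|\mathbf{U}_n-\mathbf{U}_m|}=\mathbf{0}.$$ Equivalently, $\boldsymbol{\sigma}^T\mathbf{C}=\mathbf{0}^T$, where $\mathbf{C}$ is the compatibility matrix whose row for edge $(n,m)$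 sends the in-plane displacements $(\mathbf{u}_1,\mathbf{u}_2,\dots)$ to $\frac{\mathbf{U}_n-\mathbf{U}_m}{|\mathbf{U}_n-\mathbf{U}_m|}\cdot(\mathbf{u}_n-\mathbf{u}_m)$.
   Context: A self stress of a bar framework is an assignment of a real number $\sigma_e$ to each edge $e$ such that force balance holds at every vertex, with the forces directed along unit edge vectors as written in the claim. The wheel arises as the star of an internal vertex of a planar triangulated crease pattern: the faces are the triangles $(\mathbf{U}_0,\mathbf{U}_i,\mathbf{U}_{i+1})$, which is why each angle lies in $(0,\pi)$. *)

theory Defs
  imports "HOL-Analysis.Analysis"
begin

text \<open>Points of the plane are vectors in real^2.  The hub is vertex 0, the spoke
vertices are 1..N; rim indices are taken cyclically (modulo N) on {1..N}.\<close>

definition wnext :: "nat \<Rightarrow> nat \<Rightarrow> nat" where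
  "wnext N i = (if i = N then 1 else i + 1)"

definition wprev :: "nat \<Rightarrow> nat \<Rightarrow> nat" where
  "wprev N i = (if i = 1 then N else i - 1)"

definition wheel_edges :: "nat \<Rightarrow> nat set set" where
  "wheel_edges N = {{0, i} | i. i \<in> {1..N}} \<union> {{i, wnext N i} | i. i \<in> {1..N}}"

definition cross2 :: "real^2 \<Rightarrow> real^2 \<Rightarrow> real" where
  "cross2 x y = x$1 * y$2 - x$2 * y$1"

definition vec_angle :: "real^2 \<Rightarrow> real^2 \<Rightarrow> real" where
  "vec_angle x y = arccos ((x \<bullet> y) / (norm x * norm y))"

definition csc :: "real \<Rightarrow> real" where
  "csc x = 1 / sin x"

definition is_self_stress ::
  "(nat \<Rightarrow> real^2) \<Rightarrow> nat set \<Rightarrow> nat set set \<Rightarrow> (nat set \<Rightarrow> real) \<Rightarrow> bool" where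
  "is_self_stress U V E \<sigma> \<longleftrightarrow>
     (\<forall>n\<in>V. (\<Sum>m\<in>{m\<in>V. {n, m} \<in> E}.
                 \<sigma> {n, m} *\<^sub>R ((1 / norm (U n - U m)) *\<^sub>R (U n - U m))) = 0)"

end

theory Submission
  imports Defs
begin

text \<open>Put \<open>u i = U i - U 0\<close> and \<open>X i = cross2 (u i) (u (i+1))\<close>. Then
  \<open>csc \<alpha> i = L i * L (i+1) / X i\<close> and \<open>cot \<alpha> i = u i \<bullet> u (i+1) / X i\<close>, so the rim bar
  \<open>(i, i+1)\<close> pulls vertex \<open>i\<close> with force \<open>(u (i+1) - u i) / X i\<close>. The two rim forces at \<open>i\<close> add
  up to \<open>w - (1 / X i + 1 / X (i-1)) u i\<close> with \<open>w = u (i+1) / X i + u (i-1) / X (i-1)\<close>; since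
  \<open>cross2 (u i) w = 1 - 1 = 0\<close>, the vector \<open>w\<close> is parallel to the spoke, and the spoke stress is
  exactly the coefficient that cancels the resulting spoke-direction force. Equilibrium at the
  hub is then automatic: by antisymmetry the hub force is minus the sum of all forces on the
  spoke vertices, in which the rim forces cancel in pairs around the cycle.\<close>

definition bar_force :: "(nat \<Rightarrow> real^2) \<Rightarrow> (nat set \<Rightarrow> real) \<Rightarrow> nat \<Rightarrow> nat \<Rightarrow> real^2" where
  "bar_force U \<sigma> n m = \<sigma> {n, m} *\<^sub>R ((1 / norm (U n - U m)) *\<^sub>R (U n - U m))"

lemma is_self_stress_iff_bar_force:
  "is_self_stress U V E \<sigma> \<longleftrightarrow> (\<forall>n\<in>V. (\<Sum>m\<in>{m\<in>V. {n, m} \<in> E}. bar_force U \<sigma> n m) = 0)"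
  by (simp add: is_self_stress_def bar_force_def)

lemma bar_force_antisym: "bar_force U \<sigma> m n = - bar_force U \<sigma> n m"
  unfolding bar_force_def
  by (simp add: insert_commute norm_minus_commute flip: scaleR_minus_right)

lemma inner_real2: "(x::real^2) \<bullet> y = x$1 * y$1 + x$2 * y$2"
  by (simp add: inner_vec_def sum_2)

lemma inner_square_add_cross2_square: "(b \<bullet> c)\<^sup>2 + (cross2 b c)\<^sup>2 = (b \<bullet> b) * (c \<bullet> c)"
  by (simp add: inner_real2 cross2_def power2_eq_square algebra_simps)

lemma cross2_antisym: "cross2 a b = - cross2 b a"
  by (simp add: cross2_def)

lemma cross2_add_scaleR: "cross2 b (x *\<^sub>R c + y *\<^sub>R a) = x * cross2 b c + y * cross2 b a"
  by (simp add: cross2_def algebra_simps)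

lemma cross2_pos_nonzero:
  assumes "cross2 b c > 0"
  shows "b \<noteq> 0" "c \<noteq> 0"
  using assms by (auto simp: cross2_def)

lemma cross2_eq_0_parallel:
  fixes b w :: "real^2"
  assumes "b \<noteq> 0" and "cross2 b w = 0"
  shows "w = ((b \<bullet> w) / (b \<bullet> b)) *\<^sub>R b"
proof -
  have "b$1 * b$1 + b$2 * b$2 \<noteq> 0"
    using assms(1) by (metis inner_real2 inner_eq_zero_iff)
  then show ?thesis
    using assms(2) unfolding vec_eq_iff forall_2 inner_real2 cross2_def
    by (simp add: field_simps)
qed

lemma vec_angle_cos_sin:
  fixes b c :: "real^2"
  assumes "cross2 b c > 0"
  shows "cos (vec_angle b c) = (b \<bullet> c) / (norm b * norm c)"
    and "sin (vec_angle b c) = cross2 b c / (norm b * norm c)"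
proof -
  have pos: "norm b > 0" "norm c > 0"
    using cross2_pos_nonzero[OF assms] by auto
  define t where "t = (b \<bullet> c) / (norm b * norm c)"
  have t: "\<bar>t\<bar> \<le> 1"
    unfolding t_def using Cauchy_Schwarz_ineq2[of b c] pos by (simp add: abs_div divide_le_eq_1)
  show cos: "cos (vec_angle b c) = (b \<bullet> c) / (norm b * norm c)"
    unfolding vec_angle_def t_def[symmetric] using t by (simp add: cos_arccos_abs)
  have sin_nonneg: "sin (vec_angle b c) \<ge> 0"
    unfolding vec_angle_def t_def[symmetric] using t by (simp add: sin_arccos_abs abs_square_le_1)
  have norms: "(norm b * norm c)\<^sup>2 = (b \<bullet> b) * (c \<bullet> c)"
    by (simp add: power_mult_distrib power2_norm_eq_inner)
  have "(sin (vec_angle b c))\<^sup>2 = 1 - t\<^sup>2"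
    using sin_cos_squared_add[of "vec_angle b c"] cos unfolding t_def by simp
  also have "\<dots> = (cross2 b c / (norm b * norm c))\<^sup>2"
    unfolding t_def using inner_square_add_cross2_square[of b c] norms pos
    by (simp add: power_divide field_simps)
  finally have "(sin (vec_angle b c))\<^sup>2 = (cross2 b c / (norm b * norm c))\<^sup>2" .
  then show "sin (vec_angle b c) = cross2 b c / (norm b * norm c)"
    using sin_nonneg assms pos by (simp add: power2_eq_iff_nonneg)
qed

lemma csc_vec_angle:
  "cross2 b c > 0 \<Longrightarrow> csc (vec_angle b c) = norm b * norm c / cross2 b c"
  by (simp add: csc_def vec_angle_cos_sin)

lemma cot_vec_angle:
  assumes "cross2 b c > 0"
  shows "cot (vec_angle b c) = (b \<bullet> c) / cross2 b c"
  using assms cross2_pos_nonzero[OF assms] by (simp add: cot_def vec_angle_cos_sin)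

lemma spoke_force_identity:
  fixes a b c :: "real^2"
  assumes "b \<noteq> 0" and X: "cross2 b c \<noteq> 0" and Y: "cross2 a b \<noteq> 0"
  shows "(1 / cross2 b c + 1 / cross2 a b
          - ((b \<bullet> c) / cross2 b c + (a \<bullet> b) / cross2 a b) / (b \<bullet> b)) *\<^sub>R b
       - (1 / cross2 b c) *\<^sub>R (b - c) + (1 / cross2 a b) *\<^sub>R (a - b) = 0"
proof -
  define w where "w = (1 / cross2 b c) *\<^sub>R c + (1 / cross2 a b) *\<^sub>R a"
  have "cross2 b w = 0"
    unfolding w_def cross2_add_scaleR using X Y by (simp add: cross2_antisym[of a b])
  then have parallel: "w = ((b \<bullet> w) / (b \<bullet> b)) *\<^sub>R b"
    by (rule cross2_eq_0_parallel[OF assms(1)])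
  have "b \<bullet> w = (b \<bullet> c) / cross2 b c + (a \<bullet> b) / cross2 a b"
    by (simp add: w_def inner_add_right inner_commute[of a b])
  then have "(1 / cross2 b c + 1 / cross2 a b
          - ((b \<bullet> c) / cross2 b c + (a \<bullet> b) / cross2 a b) / (b \<bullet> b)) *\<^sub>R b
       - (1 / cross2 b c) *\<^sub>R (b - c) + (1 / cross2 a b) *\<^sub>R (a - b)
       = w - ((b \<bullet> w) / (b \<bullet> b)) *\<^sub>R b"
    by (simp add: w_def algebra_simps)
  then show ?thesis
    using parallel by simp
qed

lemma spoke_vertex_balance:
  fixes U :: "nat \<Rightarrow> real^2" and \<sigma> :: "nat set \<Rightarrow> real" and h p i n :: nat
  defines "a \<equiv> U p - U h" and "b \<equiv> U i - U h" and "c \<equiv> U n - U h"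
  assumes Y: "cross2 a b > 0" and X: "cross2 b c > 0"
    and rim_prev: "\<sigma> {p, i} = - csc (vec_angle a b) * norm (U i - U p) / (norm a * norm b)"
    and rim_next: "\<sigma> {i, n} = - csc (vec_angle b c) * norm (U n - U i) / (norm b * norm c)"
    and spoke: "\<sigma> {h, i} = csc (vec_angle b c) / norm c + csc (vec_angle a b) / norm a
                  - (cot (vec_angle b c) + cot (vec_angle a b)) / norm b"
  shows "bar_force U \<sigma> i h + bar_force U \<sigma> i n + bar_force U \<sigma> i p = 0"
proof -
  have nz: "a \<noteq> 0" "b \<noteq> 0" "c \<noteq> 0"
    using cross2_pos_nonzero[OF X] cross2_pos_nonzero[OF Y] by auto
  have diff: "U i - U n = b - c" "U n - U i = c - b" "U i - U p = b - a" "U p - U i = a - b"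
    by (simp_all add: a_def b_def c_def)
  have next_force: "bar_force U \<sigma> i n = - (1 / cross2 b c) *\<^sub>R (b - c)"
    using rim_next X nz unfolding bar_force_def diff
    by (simp add: insert_commute csc_vec_angle norm_minus_commute)
  have prev_force: "bar_force U \<sigma> i p = (1 / cross2 a b) *\<^sub>R (a - b)"
    using rim_prev Y nz unfolding bar_force_def diff
    by (simp add: insert_commute csc_vec_angle norm_minus_commute flip: scaleR_minus_right)
  have hub_force: "bar_force U \<sigma> i h = (1 / cross2 b c + 1 / cross2 a b
          - ((b \<bullet> c) / cross2 b c + (a \<bullet> b) / cross2 a b) / (b \<bullet> b)) *\<^sub>R b"
    using spoke X Y nz unfolding bar_force_def b_def[symmetric]
    by (simp add: insert_commute csc_vec_angle cot_vec_angle dot_square_norm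
        inner_commute[of a b] field_simps power2_eq_square)
  show ?thesis
    unfolding hub_force next_force prev_force
    using spoke_force_identity[of b c a] X Y nz by simp
qed

lemma wnext_in_range: "N \<ge> 1 \<Longrightarrow> i \<in> {1..N} \<Longrightarrow> wnext N i \<in> {1..N}"
  by (auto simp: wnext_def)

lemma wprev_in_range: "N \<ge> 1 \<Longrightarrow> i \<in> {1..N} \<Longrightarrow> wprev N i \<in> {1..N}"
  by (auto simp: wprev_def)

lemma wnext_wprev: "N \<ge> 1 \<Longrightarrow> i \<in> {1..N} \<Longrightarrow> wnext N (wprev N i) = i"
  by (auto simp: wnext_def wprev_def)

lemma wprev_wnext: "N \<ge> 1 \<Longrightarrow> i \<in> {1..N} \<Longrightarrow> wprev N (wnext N i) = i"
  by (auto simp: wnext_def wprev_def)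

lemma bij_betw_wprev: "N \<ge> 1 \<Longrightarrow> bij_betw (wprev N) {1..N} {1..N}"
  by (rule bij_betw_byWitness[where f' = "wnext N"]) (auto simp: wnext_def wprev_def)

lemma hub_balance_from_spoke_vertices:
  fixes G :: "nat \<Rightarrow> nat \<Rightarrow> 'a::ab_group_add"
  assumes "N \<ge> 1" and antisym: "\<And>n m. G m n = - G n m"
    and balance: "\<And>i. i \<in> {1..N} \<Longrightarrow> G i 0 + G i (wnext N i) + G i (wprev N i) = 0"
  shows "(\<Sum>j\<in>{1..N}. G 0 j) = 0"
proof -
  have "(\<Sum>j\<in>{1..N}. G 0 j)
      = (\<Sum>j\<in>{1..N}. G j (wnext N j)) - (\<Sum>j\<in>{1..N}. G (wprev N j) (wnext N (wprev N j)))"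
    unfolding sum_subtractf[symmetric]
  proof (rule sum.cong[OF refl])
    fix j assume "j \<in> {1..N}"
    then show "G 0 j = G j (wnext N j) - G (wprev N j) (wnext N (wprev N j))"
      using balance[of j] antisym[of j 0] antisym[of j "wprev N j"] wnext_wprev[OF assms(1)]
      by (simp add: algebra_simps eq_neg_iff_add_eq_0)
  qed
  also have "\<dots> = 0"
    using sum.reindex_bij_betw[OF bij_betw_wprev[OF assms(1)], of "\<lambda>j. G j (wnext N j)"] by simp
  finally show ?thesis .
qed

lemma wheel_edge_spoke_iff:
  assumes "N \<ge> 3" and "i \<in> {1..N}"
  shows "{i, m} \<in> wheel_edges N \<longleftrightarrow> m = 0 \<or> m = wnext N i \<or> m = wprev N i"
proof
  assume "{i, m} \<in> wheel_edges N"
  then obtain j where j: "j \<in> {1..N}" and "{i, m} = {0, j} \<or> {i, m} = {j, wnext N j}"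
    unfolding wheel_edges_def by blast
  then have "m = 0 \<or> (i = j \<and> m = wnext N j) \<or> (i = wnext N j \<and> m = j)"
    using assms(2) by (auto simp: doubleton_eq_iff)
  then show "m = 0 \<or> m = wnext N i \<or> m = wprev N i"
    using wprev_wnext[of N j] j assms(1) by auto
next
  have "{wprev N i, wnext N (wprev N i)} \<in> wheel_edges N"
    using wprev_in_range[of N i] assms unfolding wheel_edges_def by auto
  then show "m = 0 \<or> m = wnext N i \<or> m = wprev N i \<Longrightarrow> {i, m} \<in> wheel_edges N"
    using assms wnext_wprev[of N i] unfolding wheel_edges_def by (auto simp: insert_commute)
qed

lemma wheel_neighbours_spoke:
  assumes "N \<ge> 3" and "i \<in> {1..N}"
  shows "{m\<in>{0..N}. {i, m} \<in> wheel_edges N} = {0, wnext N i, wprev N i}"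
  using wheel_edge_spoke_iff[OF assms] wnext_in_range[of N i] wprev_in_range[of N i] assms
  by auto

lemma wheel_neighbours_hub: "{m\<in>{0..N}. {0, m} \<in> wheel_edges N} = {1..N}"
  by (auto simp: wheel_edges_def doubleton_eq_iff wnext_def split: if_splits)

lemma wheel_neighbours_distinct:
  assumes "N \<ge> 3" and "i \<in> {1..N}"
  shows "wnext N i \<noteq> i" "wprev N i \<noteq> i" "wnext N i \<noteq> wprev N i"
    "wnext N i \<noteq> 0" "wprev N i \<noteq> 0"
  using assms by (auto simp: wnext_def wprev_def)

lemma wheel_self_stress_of_spoke_vertex_balance:
  assumes N: "N \<ge> 3"
    and spoke_balance: "\<And>i. i \<in> {1..N} \<Longrightarrow>
      bar_force U \<sigma> i 0 + bar_force U \<sigma> i (wnext N i) + bar_force U \<sigma> i (wprev N i) = 0"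
  shows "is_self_stress U {0..N} (wheel_edges N) \<sigma>"
  unfolding is_self_stress_iff_bar_force
proof
  fix n assume "n \<in> {0..N}"
  then consider "n = 0" | "n \<in> {1..N}" by fastforce
  then show "(\<Sum>m\<in>{m\<in>{0..N}. {n, m} \<in> wheel_edges N}. bar_force U \<sigma> n m) = 0"
  proof cases
    case 1
    have "(\<Sum>j\<in>{1..N}. bar_force U \<sigma> 0 j) = 0"
      using N by (intro hub_balance_from_spoke_vertices bar_force_antisym spoke_balance) auto
    then show ?thesis by (simp only: 1 wheel_neighbours_hub)
  next
    case 2
    then show ?thesis
      unfolding wheel_neighbours_spoke[OF N 2]
      using spoke_balance wheel_neighbours_distinct[OF N 2] by (simp add: add.assoc)
  qed
qed

theorem mainTheorem1:
  fixes N :: nat and U :: "nat \<Rightarrow> real^2" and \<sigma> :: "nat set \<Rightarrow> real"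
    and L :: "nat \<Rightarrow> real" and DL :: "nat \<Rightarrow> real" and \<alpha> :: "nat \<Rightarrow> real"
  assumes N: "N \<ge> 3"
    and spokes_nonzero: "\<forall>i\<in>{1..N}. U i \<noteq> U 0"
    and ccw: "\<forall>i\<in>{1..N}. cross2 (U i - U 0) (U (wnext N i) - U 0) > 0"
    and L_def: "\<forall>i\<in>{1..N}. L i = norm (U i - U 0)"
    and DL_def: "\<forall>i\<in>{1..N}. DL i = norm (U (wnext N i) - U i)"
    and alpha_def: "\<forall>i\<in>{1..N}. \<alpha> i = vec_angle (U i - U 0) (U (wnext N i) - U 0)"
    and alpha_range: "\<forall>i\<in>{1..N}. 0 < \<alpha> i \<and> \<alpha> i < pi"
    and alpha_sum: "(\<Sum>i=1..N. \<alpha> i) = 2 * pi"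
    and rim: "\<forall>i\<in>{1..N}. \<sigma> {i, wnext N i} = - csc (\<alpha> i) * DL i / (L i * L (wnext N i))"
    and spoke: "\<forall>i\<in>{1..N}. \<sigma> {0, i} =
         csc (\<alpha> i) / L (wnext N i) + csc (\<alpha> (wprev N i)) / L (wprev N i)
         - (cot (\<alpha> i) + cot (\<alpha> (wprev N i))) / L i"
  shows "is_self_stress U {0..N} (wheel_edges N) \<sigma>"
proof -
  have N1: "N \<ge> 1" using N by simp
  have spoke_balance:
    "bar_force U \<sigma> i 0 + bar_force U \<sigma> i (wnext N i) + bar_force U \<sigma> i (wprev N i) = 0"
    if i: "i \<in> {1..N}" for i
  proof -
    have p: "wprev N i \<in> {1..N}" and n: "wnext N i \<in> {1..N}"
      and np: "wnext N (wprev N i) = i"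
      using wprev_in_range wnext_in_range wnext_wprev N1 i by auto
    show ?thesis
      by (rule spoke_vertex_balance)
         (use i p n np ccw[rule_format, of i] ccw[rule_format, of "wprev N i"]
            rim[rule_format, of i] rim[rule_format, of "wprev N i"] spoke[rule_format, of i]
            alpha_def L_def DL_def in auto)
  qed
  then show ?thesis
    by (rule wheel_self_stress_of_spoke_vertex_balance[OF N])
qed

end
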